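(* Let $\mathcal{X}$ be a finite set, $\pi$ a probability distribution on $\mathcal{X}$ with $\pi(x)>0$ for all $x$, $p>1$, $\alpha>0$, and $\mathcal{N}$ a symmetric neighborhood mapping on $\mathcal{X}$ (with $x\notin\mathcal{N}(x)$) such that every stochastic matrix $K$ with $K(x,y)>0$ iff $y\in\mathcal{N}(x)$ is irreducible, and $\max_x|\mathcal{N}(x)|\le p^\alpha$. Suppose there exist $x^*\in\mathcal{X}$, an operator $\mathsf{T}\colon\mathcal{X}\to\mathcal{X}$ and a constant $\nu>\alpha$ such that $\mathsf{T}(x^* )=x^*$ and for every $x\neq x^*$, $\mathsf{T}(x)\in\mathcal{N}(x)$ and $\pi(\mathsf{T}(x))\ge p^\nu\pi(x)$. Let $h\colon(0,\infty)\to(0,\infty)$ be a non-decreasing balancing function, i.e. $h(u)=u\,h(1/u)$ for all $u>0$. Define $Z_h(x)=\sum_{y\in\mathcal{N}(x)}h(\pi(y)/\pi(x))$, $K_h(x,y)=\mathbf{1}_{\mathcal{N}(x)}(y)h(\pi(y)/\pi(x))/Z_h(x)$, $\pi_h$ the stationary distribution of $K_h$, $\omega=\pi/\pi_h$, and the transition rate matrix $Q_h(x,y)=K_h(x,y)/\omega(x)$ for $x\ne y$, $Q_h(x,x)=-\sum_{x'\neq x}Q_h(x,x')$. Then $$\mathrm{Gap}(Q_h)\ge\kappa(p,\alpha,\nu)\frac{h(p^\nu)}{\mathbb{E}_\pi[Z_h]},\qquad \kappa(p,\alpha,\nu)=\tfrac12\{1-p^{-(\nu-\alpha)/2}\}^3.$$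 Further, $2\,\mathrm{Gap}(Q_h)/\kappa(p,\alpha,\nu)\ge p^{\nu-\alpha}$ if $h(u)=1+u$; $\ge p^{\nu-2\alpha}$ if $h(u)=\min(1,u)$; and $\ge p^{\nu/2}/(p^{2\alpha-\nu}+p^{\alpha-\nu/2})$ if $h(u)=\sqrt{u}$.
   Context: $\mathbb{E}_\pi[Z_h]=\sum_x\pi(x)Z_h(x)$. For an irreducible reversible transition rate matrix $Q$ with eigenvalues $0=\lambda_1(Q)>\lambda_2(Q)\ge\cdots$, $\mathrm{Gap}(Q)=-\lambda_2(Q)$. *)

theory Defs
  imports "HOL-Analysis.Analysis"
begin

definition stochastic :: "('a::finite \<Rightarrow> 'a \<Rightarrow> real) \<Rightarrow> bool" where
  "stochastic K \<longleftrightarrow> (\<forall>x y. K x y \<ge> 0) \<and> (\<forall>x. (\<Sum>y\<in>UNIV. K x y) = 1)"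

text \<open>Irreducibility: every state can reach every state through transitions of positive
  probability (i.e. for all x y there is n with K^n(x,y) > 0).\<close>
definition irreducible_mat :: "('a::finite \<Rightarrow> 'a \<Rightarrow> real) \<Rightarrow> bool" where
  "irreducible_mat K \<longleftrightarrow> (\<forall>x y. (x, y) \<in> {(a, b). K a b > 0}\<^sup>*)"

text \<open>Stationary distribution (unique for irreducible K).\<close>
definition stationary_dist :: "('a::finite \<Rightarrow> 'a \<Rightarrow> real) \<Rightarrow> ('a \<Rightarrow> real)" where
  "stationary_dist K = (THE \<mu>. (\<forall>x. \<mu> x \<ge> 0) \<and> (\<Sum>x\<in>UNIV. \<mu> x) = 1 \<and>
                          (\<forall>y. (\<Sum>x\<in>UNIV. \<mu> x * K x y) = \<mu> y))"

definition Zh :: "(real \<Rightarrow> real) \<Rightarrow> ('a \<Rightarrow> real) \<Rightarrow> ('a \<Rightarrow> 'a set) \<Rightarrow> 'a \<Rightarrow> real" where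
  "Zh h \<pi> N x = (\<Sum>y\<in>N x. h (\<pi> y / \<pi> x))"

definition Kh :: "(real \<Rightarrow> real) \<Rightarrow> ('a \<Rightarrow> real) \<Rightarrow> ('a \<Rightarrow> 'a set) \<Rightarrow> 'a \<Rightarrow> 'a \<Rightarrow> real" where
  "Kh h \<pi> N x y = (if y \<in> N x then h (\<pi> y / \<pi> x) / Zh h \<pi> N x else 0)"

definition Qh :: "(real \<Rightarrow> real) \<Rightarrow> ('a::finite \<Rightarrow> real) \<Rightarrow> ('a \<Rightarrow> 'a set) \<Rightarrow> 'a \<Rightarrow> 'a \<Rightarrow> real" where
  "Qh h \<pi> N x y =
     (let \<pi>h = stationary_dist (Kh h \<pi> N); \<omega> = (\<lambda>z. \<pi> z / \<pi>h z);
          off = (\<lambda>a b. Kh h \<pi> N a b / \<omega> a)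
      in if x \<noteq> y then off x y else - (\<Sum>x'\<in>UNIV - {x}. off x x'))"

definition expect :: "('a::finite \<Rightarrow> real) \<Rightarrow> ('a \<Rightarrow> real) \<Rightarrow> real" where
  "expect \<pi> f = (\<Sum>x\<in>UNIV. \<pi> x * f x)"

definition to_mat :: "('a::finite \<Rightarrow> 'a \<Rightarrow> real) \<Rightarrow> real^'a^'a" where
  "to_mat A = (\<chi> x y. A x y)"

definition is_eigenvalue :: "real^'n^'n \<Rightarrow> real \<Rightarrow> bool" where
  "is_eigenvalue A \<mu> \<longleftrightarrow> (\<exists>v. v \<noteq> 0 \<and> A *v v = \<mu> *\<^sub>R v)"

definition eigenspace_of :: "real^'n^'n \<Rightarrow> real \<Rightarrow> (real^'n) set" where
  "eigenspace_of A \<mu> = {v. A *v v = \<mu> *\<^sub>R v}"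

text \<open>Number of eigenvalues \<ge> t counted with multiplicity (for reversible, hence
  diagonalizable, matrices geometric = algebraic multiplicity).\<close>
definition eig_count :: "real^'n^'n \<Rightarrow> real \<Rightarrow> nat" where
  "eig_count A t = (\<Sum>\<mu>\<in>{\<mu>. is_eigenvalue A \<mu> \<and> t \<le> \<mu>}. dim (eigenspace_of A \<mu>))"

text \<open>k-th largest eigenvalue, counted with multiplicity.\<close>
definition eig_k :: "real^'n^'n \<Rightarrow> nat \<Rightarrow> real" where
  "eig_k A k = Max {\<mu>. is_eigenvalue A \<mu> \<and> k \<le> eig_count A \<mu>}"

definition Gap :: "('a::finite \<Rightarrow> 'a \<Rightarrow> real) \<Rightarrow> real" where
  "Gap Q = - eig_k (to_mat Q) 2"

definition kappa :: "real \<Rightarrow> real \<Rightarrow> real \<Rightarrow> real" where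
  "kappa p \<alpha> \<nu> = (1/2) * (1 - p powr (-(\<nu> - \<alpha>) / 2)) ^ 3"

end

theory Submission
  imports Defs
begin

text \<open>
  \<open>Q\<^sub>h\<close> is reversible with respect to \<open>\<pi>\<close>, so its spectral gap is at least every \<open>\<gamma>\<close>
  with \<open>\<gamma> Var\<^sub>\<pi> f \<le> D f\<close>, \<open>D\<close> the Dirichlet form.  Iterating the drift map \<open>T\<close> leads from
  every state to the mode \<open>x\<^sup>*\<close>.  Writing \<open>f x - f x\<^sup>*\<close> as a telescoping sum along this path
  and applying Cauchy--Schwarz with weights \<open>\<theta>\<^sup>k\<close>, where \<open>\<theta> = p powr (-(\<nu> - \<alpha>)/2)\<close>, gives
  \<open>(1 - \<theta>)\<^sup>2 \<Sum>\<^sub>x \<pi> x (f x - f x\<^sup>*)\<^sup>2 \<le> \<Sum>\<^sub>x \<pi> x (f x - f (T x))\<^sup>2\<close>: every state has at most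
  \<open>p powr \<alpha>\<close> neighbours, all lighter by the factor \<open>p powr \<nu>\<close>, so the \<open>\<pi>\<close>-mass of the preimage
  of a state under \<open>T\<^sup>k\<close> is at most \<open>\<theta>\<^sup>2\<^sup>k\<close> times its own mass.  By monotonicity of \<open>h\<close> every
  edge \<open>x \<rightarrow> T x\<close> has rate at least \<open>h (p powr \<nu>) / E\<^sub>\<pi>[Z\<^sub>h]\<close>, which gives the main bound;
  the three special cases follow from explicit upper bounds on \<open>E\<^sub>\<pi>[Z\<^sub>h]\<close>.
\<close>

section \<open>Eigenvalues and quadratic forms\<close>

lemma to_mat_mult_apply: "(to_mat Q *v v) $ x = (\<Sum>y\<in>UNIV. Q x y * v $ y)"
  by (simp add: to_mat_def matrix_vector_mult_def)

lemma is_eigenvalue_to_mat_iff: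
  "is_eigenvalue (to_mat Q) \<mu> \<longleftrightarrow> (\<exists>f. f \<noteq> (\<lambda>_. 0) \<and> (\<forall>x. (\<Sum>y\<in>UNIV. Q x y * f y) = \<mu> * f x))"
proof
  assume "is_eigenvalue (to_mat Q) \<mu>"
  then obtain v where "v \<noteq> 0" "to_mat Q *v v = \<mu> *\<^sub>R v"
    unfolding is_eigenvalue_def by blast
  then show "\<exists>f. f \<noteq> (\<lambda>_. 0) \<and> (\<forall>x. (\<Sum>y\<in>UNIV. Q x y * f y) = \<mu> * f x)"
    by (intro exI[of _ "\<lambda>x. v $ x"]) (auto simp: vec_eq_iff to_mat_mult_apply fun_eq_iff)
next
  assume "\<exists>f. f \<noteq> (\<lambda>_. 0) \<and> (\<forall>x. (\<Sum>y\<in>UNIV. Q x y * f y) = \<mu> * f x)"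
  then obtain f where "f \<noteq> (\<lambda>_. 0)" "\<forall>x. (\<Sum>y\<in>UNIV. Q x y * f y) = \<mu> * f x" by blast
  then show "is_eigenvalue (to_mat Q) \<mu>"
    unfolding is_eigenvalue_def
    by (intro exI[of _ "\<chi> x. f x"]) (auto simp: vec_eq_iff to_mat_mult_apply fun_eq_iff)
qed

lemma dim_eigenspace_pos: "is_eigenvalue A \<mu> \<Longrightarrow> 1 \<le> dim (eigenspace_of A \<mu>)"
proof -
  assume "is_eigenvalue A \<mu>"
  then obtain v where "v \<noteq> 0" "v \<in> eigenspace_of A \<mu>"
    unfolding is_eigenvalue_def eigenspace_of_def by blast
  then have "\<not> eigenspace_of A \<mu> \<subseteq> {0}" by blast
  then show ?thesis using dim_eq_0 by (metis less_one not_le)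
qed

lemma eig_k_2_le:
  assumes fin: "finite {\<mu>. is_eigenvalue A \<mu>}"
    and top: "is_eigenvalue A \<mu>\<^sub>0" "dim (eigenspace_of A \<mu>\<^sub>0) \<le> 1"
    and other: "is_eigenvalue A m" "m \<noteq> \<mu>\<^sub>0"
    and below: "\<And>\<mu>. is_eigenvalue A \<mu> \<Longrightarrow> \<mu> \<noteq> \<mu>\<^sub>0 \<Longrightarrow> \<mu> \<le> c" and "c < \<mu>\<^sub>0"
  shows "eig_k A 2 \<le> c"
proof -
  define S where "S = {\<mu>. is_eigenvalue A \<mu> \<and> 2 \<le> eig_count A \<mu>}"
  have fin_ge: "finite {\<mu>. is_eigenvalue A \<mu> \<and> t \<le> \<mu>}" for t
    by (rule finite_subset[OF _ fin]) auto
  have "m \<in> S"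
  proof -
    have "m \<le> c" using below other by blast
    then have "{m, \<mu>\<^sub>0} \<subseteq> {\<mu>. is_eigenvalue A \<mu> \<and> m \<le> \<mu>}" using top other \<open>c < \<mu>\<^sub>0\<close> by auto
    then have "(\<Sum>\<mu>\<in>{m, \<mu>\<^sub>0}. dim (eigenspace_of A \<mu>)) \<le> eig_count A m"
      unfolding eig_count_def by (intro sum_mono2 fin_ge) auto
    then show ?thesis
      using dim_eigenspace_pos[OF top(1)] dim_eigenspace_pos[OF other(1)] other
      unfolding S_def by simp
  qed
  moreover have "\<mu> \<le> c" if "\<mu> \<in> S" for \<mu>
  proof (rule ccontr)
    assume "\<not> \<mu> \<le> c"
    then have "{\<mu>'. is_eigenvalue A \<mu>' \<and> \<mu> \<le> \<mu>'} \<subseteq> {\<mu>\<^sub>0}" using below by force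
    then have "eig_count A \<mu> \<le> (\<Sum>\<mu>'\<in>{\<mu>\<^sub>0}. dim (eigenspace_of A \<mu>'))"
      unfolding eig_count_def by (intro sum_mono2) auto
    with that top(2) show False unfolding S_def by simp
  qed
  moreover have "finite S" unfolding S_def by (rule finite_subset[OF _ fin]) auto
  ultimately show ?thesis unfolding eig_k_def S_def[symmetric] by (subst Max_le_iff) auto
qed

lemma quadratic_nonneg_imp_linear_coeff_zero:
  fixes a b :: real
  assumes "\<And>t. 0 \<le> 2 * t * a + t\<^sup>2 * b"
  shows "a = 0"
proof (rule ccontr)
  assume "a \<noteq> 0"
  define s where "s = \<bar>b\<bar> + 1"
  have "s > 0" unfolding s_def by simp
  have "2 * (- a / s) * a + (- a / s)\<^sup>2 * b \<le> 2 * (- a / s) * a + (- a / s)\<^sup>2 * s"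
    unfolding s_def by (intro add_left_mono mult_left_mono) auto
  also have "\<dots> = - (a\<^sup>2 / s)" using \<open>s > 0\<close> by (simp add: field_simps power2_eq_square)
  also have "\<dots> < 0" using \<open>a \<noteq> 0\<close> \<open>s > 0\<close> by simp
  finally show False using assms[of "- a / s"] by simp
qed

lemma psd_form_zero_imp_kernel:
  fixes c :: "'n::finite \<Rightarrow> 'n \<Rightarrow> real"
  assumes sym: "\<And>x y. c x y = c y x"
    and psd: "\<And>f. 0 \<le> (\<Sum>x\<in>UNIV. \<Sum>y\<in>UNIV. c x y * f x * f y)"
    and zero: "(\<Sum>x\<in>UNIV. \<Sum>y\<in>UNIV. c x y * g x * g y) = 0"
  shows "(\<Sum>y\<in>UNIV. c x\<^sub>0 y * g y) = 0"
proof (rule quadratic_nonneg_imp_linear_coeff_zero)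
  fix t :: real
  define f where "f x = g x + (if x = x\<^sub>0 then t else 0)" for x
  have expand: "c x y * f x * f y = c x y * g x * g y + (if x = x\<^sub>0 then t * c x\<^sub>0 y * g y else 0)
      + (if y = x\<^sub>0 then t * c x\<^sub>0 x * g x else 0) + (if x = x\<^sub>0 then if y = x\<^sub>0 then t\<^sup>2 * c x\<^sub>0 x\<^sub>0 else 0 else 0)"
    for x y
    unfolding f_def using sym[of x\<^sub>0 x] by (auto simp: algebra_simps power2_eq_square)
  have outer: "(\<Sum>x\<in>UNIV. \<Sum>y\<in>UNIV. if x = x\<^sub>0 then F y else 0) = (\<Sum>y\<in>UNIV. F y)"
    for F :: "'n \<Rightarrow> real"
    by (subst sum.swap) simp
  have "(\<Sum>x\<in>UNIV. \<Sum>y\<in>UNIV. c x y * f x * f y)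
      = 2 * t * (\<Sum>y\<in>UNIV. c x\<^sub>0 y * g y) + t\<^sup>2 * c x\<^sub>0 x\<^sub>0"
    unfolding expand sum.distrib zero outer
    by (simp add: sum_distrib_left algebra_simps)
  then show "0 \<le> 2 * t * (\<Sum>y\<in>UNIV. c x\<^sub>0 y * g y) + t\<^sup>2 * c x\<^sub>0 x\<^sub>0" using psd[of f] by simp
qed

section \<open>Spectral gap of a reversible rate matrix\<close>

locale reversible_rates =
  fixes \<pi> :: "'n::finite \<Rightarrow> real" and Q :: "'n \<Rightarrow> 'n \<Rightarrow> real"
  assumes weight_pos: "\<And>x. \<pi> x > 0"
    and detailed_balance: "\<And>x y. \<pi> x * Q x y = \<pi> y * Q y x"
    and row_sum_zero: "\<And>x. (\<Sum>y\<in>UNIV. Q x y) = 0"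
begin

definition apply_rates :: "('n \<Rightarrow> real) \<Rightarrow> 'n \<Rightarrow> real" where
  "apply_rates f x = (\<Sum>y\<in>UNIV. Q x y * f y)"

definition inner_pi :: "('n \<Rightarrow> real) \<Rightarrow> ('n \<Rightarrow> real) \<Rightarrow> real" where
  "inner_pi f g = (\<Sum>x\<in>UNIV. \<pi> x * f x * g x)"

definition dirichlet :: "('n \<Rightarrow> real) \<Rightarrow> real" where
  "dirichlet f = (\<Sum>x\<in>UNIV. \<Sum>y\<in>UNIV. \<pi> x * Q x y * (f x - f y)\<^sup>2) / 2"

lemma is_eigenvalue_iff: "is_eigenvalue (to_mat Q) \<mu> \<longleftrightarrow>
    (\<exists>f. f \<noteq> (\<lambda>_. 0) \<and> (\<forall>x. apply_rates f x = \<mu> * f x))"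
  unfolding is_eigenvalue_to_mat_iff apply_rates_def ..

lemma apply_rates_const: "apply_rates (\<lambda>_. c) x = 0"
  by (simp add: apply_rates_def row_sum_zero flip: sum_distrib_right)

lemma apply_rates_scale: "apply_rates (\<lambda>x. c * f x) = (\<lambda>x. c * apply_rates f x)"
  by (simp add: fun_eq_iff apply_rates_def sum_distrib_left ac_simps)

lemma inner_pi_scale: "inner_pi (\<lambda>x. c * f x) (\<lambda>x. c * g x) = c\<^sup>2 * inner_pi f g"
  by (simp add: inner_pi_def sum_distrib_left power2_eq_square ac_simps)

lemma inner_pi_self_eq: "inner_pi f f = (\<Sum>x\<in>UNIV. \<pi> x * (f x)\<^sup>2)"
  by (simp add: inner_pi_def power2_eq_square ac_simps)

lemma inner_pi_self_pos: "f \<noteq> (\<lambda>_. 0) \<Longrightarrow> 0 < inner_pi f f"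
proof -
  assume "f \<noteq> (\<lambda>_. 0)"
  then obtain x\<^sub>0 where "f x\<^sub>0 \<noteq> 0" by auto
  then show ?thesis unfolding inner_pi_self_eq using weight_pos
    by (intro sum_pos2[of UNIV x\<^sub>0]) (auto simp: less_imp_le)
qed

lemma inner_pi_apply_rates_commute: "inner_pi f (apply_rates g) = inner_pi g (apply_rates f)"
proof -
  have "inner_pi f (apply_rates g) = (\<Sum>x\<in>UNIV. \<Sum>y\<in>UNIV. (\<pi> x * Q x y) * f x * g y)"
    by (simp add: inner_pi_def apply_rates_def sum_distrib_left ac_simps)
  also have "\<dots> = (\<Sum>y\<in>UNIV. \<Sum>x\<in>UNIV. (\<pi> y * Q y x) * f x * g y)"
    by (subst sum.swap) (simp add: detailed_balance)
  also have "\<dots> = inner_pi g (apply_rates f)"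
    by (simp add: inner_pi_def apply_rates_def sum_distrib_left ac_simps)
  finally show ?thesis .
qed

lemma inner_pi_apply_rates_self: "inner_pi f (apply_rates f) = - dirichlet f"
proof -
  have diag: "(\<Sum>x\<in>UNIV. \<Sum>y\<in>UNIV. \<pi> x * Q x y * (f x)\<^sup>2) = 0"
    by (simp add: row_sum_zero flip: sum_distrib_left sum_distrib_right)
  have "(\<Sum>x\<in>UNIV. \<Sum>y\<in>UNIV. \<pi> x * Q x y * (f y)\<^sup>2) = (\<Sum>y\<in>UNIV. \<Sum>x\<in>UNIV. \<pi> y * Q y x * (f y)\<^sup>2)"
    by (subst sum.swap) (simp add: detailed_balance)
  with diag have diag': "(\<Sum>x\<in>UNIV. \<Sum>y\<in>UNIV. \<pi> x * Q x y * (f y)\<^sup>2) = 0" by simp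
  have "(\<Sum>x\<in>UNIV. \<Sum>y\<in>UNIV. \<pi> x * Q x y * (f x - f y)\<^sup>2)
      = (\<Sum>x\<in>UNIV. \<Sum>y\<in>UNIV. \<pi> x * Q x y * (f x)\<^sup>2 + \<pi> x * Q x y * (f y)\<^sup>2
          - 2 * (\<pi> x * Q x y * f x * f y))"
    by (simp add: power2_diff algebra_simps)
  also have "\<dots> = - 2 * (\<Sum>x\<in>UNIV. \<Sum>y\<in>UNIV. \<pi> x * Q x y * f x * f y)"
    using diag diag' by (simp add: sum.distrib sum_subtractf sum_distrib_left sum_negf)
  also have "(\<Sum>x\<in>UNIV. \<Sum>y\<in>UNIV. \<pi> x * Q x y * f x * f y) = inner_pi f (apply_rates f)"
    by (simp add: inner_pi_def apply_rates_def sum_distrib_left ac_simps)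
  finally show ?thesis by (simp add: dirichlet_def)
qed

lemma dirichlet_add_const: "dirichlet (\<lambda>x. f x + c) = dirichlet f"
  by (simp add: dirichlet_def)

lemma eigenfunctions_orthogonal:
  assumes "\<And>x. apply_rates f x = \<mu> * f x" "\<And>x. apply_rates g x = \<mu>' * g x" "\<mu> \<noteq> \<mu>'"
  shows "inner_pi f g = 0"
proof -
  have "\<mu>' * inner_pi f g = inner_pi f (apply_rates g)"
    by (simp add: inner_pi_def assms(2) sum_distrib_left ac_simps)
  also have "\<dots> = inner_pi g (apply_rates f)" by (rule inner_pi_apply_rates_commute)
  also have "\<dots> = \<mu> * inner_pi f g"
    by (simp add: inner_pi_def assms(1) sum_distrib_left ac_simps)
  finally show ?thesis using assms(3) by simp
qed

lemma finite_eigenvalues: "finite {\<mu>. is_eigenvalue (to_mat Q) \<mu>}"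
proof -
  have "finite {\<mu>. is_eigenvalue (to_mat Q) \<mu>} \<and> card {\<mu>. is_eigenvalue (to_mat Q) \<mu>} \<le> CARD('n)"
  proof (rule finite_if_finite_subsets_card_bdd)
    fix G assume G: "G \<subseteq> {\<mu>. is_eigenvalue (to_mat Q) \<mu>}" "finite G"
    then have "\<forall>\<mu>\<in>G. \<exists>f. f \<noteq> (\<lambda>_. 0) \<and> (\<forall>x. apply_rates f x = \<mu> * f x)"
      unfolding is_eigenvalue_iff by blast
    then obtain ef where ef: "\<And>\<mu>. \<mu> \<in> G \<Longrightarrow> ef \<mu> \<noteq> (\<lambda>_. 0)"
      "\<And>\<mu> x. \<mu> \<in> G \<Longrightarrow> apply_rates (ef \<mu>) x = \<mu> * ef \<mu> x"
      by metis
    define u where "u \<mu> = (\<chi> x. sqrt (\<pi> x) * ef \<mu> x)" for \<mu>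
    have inner_u: "u \<mu> \<bullet> u \<mu>' = inner_pi (ef \<mu>) (ef \<mu>')" for \<mu> \<mu>'
      unfolding u_def inner_vec_def inner_pi_def
      using weight_pos by (intro sum.cong) (auto simp: less_imp_le)
    have orth: "u \<mu> \<bullet> u \<mu>' = 0" if "\<mu> \<in> G" "\<mu>' \<in> G" "\<mu> \<noteq> \<mu>'" for \<mu> \<mu>'
      unfolding inner_u using that ef(2) by (intro eigenfunctions_orthogonal) auto
    have nonzero: "u \<mu> \<bullet> u \<mu> > 0" if "\<mu> \<in> G" for \<mu>
      unfolding inner_u using that ef(1) by (intro inner_pi_self_pos) auto
    have "inj_on u G" using orth nonzero by (intro inj_onI) (metis less_irrefl)
    moreover have "independent (u ` G)"
      using orth nonzero by (intro pairwise_orthogonal_independent)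
        (auto simp: pairwise_def orthogonal_def)
    ultimately show "card G \<le> CARD('n)"
      using independent_bound[of "u ` G"] card_image by fastforce
  qed
  then show ?thesis ..
qed

lemma exists_rayleigh_minimizer:
  obtains m f\<^sub>0 where "f\<^sub>0 \<noteq> (\<lambda>_. 0)" "m * inner_pi f\<^sub>0 f\<^sub>0 = inner_pi f\<^sub>0 (apply_rates f\<^sub>0)"
    "\<And>f. m * inner_pi f f \<le> inner_pi f (apply_rates f)"
proof -
  define R where "R v = inner_pi (($) v) (apply_rates (($) v)) / inner_pi (($) v) (($) v)"
    for v :: "real^'n"
  have vec_nonzero: "(($) v) \<noteq> (\<lambda>_. 0)" if "v \<noteq> 0" for v :: "real^'n"
    using that by (auto simp: vec_eq_iff fun_eq_iff)
  have "continuous_on (sphere 0 1) R"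
    unfolding R_def inner_pi_def apply_rates_def
    using inner_pi_self_pos[OF vec_nonzero] unfolding inner_pi_def
    by (intro continuous_intros) (auto, metis less_irrefl norm_zero zero_neq_one)
  then obtain v\<^sub>0 where v\<^sub>0: "v\<^sub>0 \<in> sphere 0 1" "\<And>w. w \<in> sphere 0 1 \<Longrightarrow> R v\<^sub>0 \<le> R w"
    using continuous_attains_inf[of "sphere 0 1" R] by auto
  show ?thesis
  proof
    have "v\<^sub>0 \<noteq> 0" using v\<^sub>0(1) by auto
    then show "($) v\<^sub>0 \<noteq> (\<lambda>_. 0)" by (rule vec_nonzero)
    then show "R v\<^sub>0 * inner_pi (($) v\<^sub>0) (($) v\<^sub>0) = inner_pi (($) v\<^sub>0) (apply_rates (($) v\<^sub>0))"
      unfolding R_def using inner_pi_self_pos[of "($) v\<^sub>0"] by simp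
  next
    fix f
    show "R v\<^sub>0 * inner_pi f f \<le> inner_pi f (apply_rates f)"
    proof (cases "f = (\<lambda>_. 0)")
      case True
      then show ?thesis by (simp add: inner_pi_def)
    next
      case False
      define c where "c = 1 / norm (\<chi> x. f x)"
      have "(\<chi> x. f x) \<noteq> 0" using False by (auto simp: vec_eq_iff fun_eq_iff)
      then have "c \<noteq> 0" "c *\<^sub>R (\<chi> x. f x) \<in> sphere 0 1" by (auto simp: c_def)
      moreover have "($) (c *\<^sub>R (\<chi> x. f x)) = (\<lambda>x. c * f x)" by (simp add: fun_eq_iff)
      ultimately have "R v\<^sub>0 \<le> inner_pi f (apply_rates f) / inner_pi f f"
        using v\<^sub>0(2)[of "c *\<^sub>R (\<chi> x. f x)"] by (simp add: R_def apply_rates_scale inner_pi_scale)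
      then show ?thesis using inner_pi_self_pos[OF False] by (simp add: le_divide_eq)
    qed
  qed
qed

lemma rayleigh_minimizer_eigenfunction:
  assumes min: "\<And>f. m * inner_pi f f \<le> inner_pi f (apply_rates f)"
    and attained: "m * inner_pi f\<^sub>0 f\<^sub>0 = inner_pi f\<^sub>0 (apply_rates f\<^sub>0)"
  shows "apply_rates f\<^sub>0 x = m * f\<^sub>0 x"
proof -
  define c where "c x y = \<pi> x * Q x y - m * (if x = y then \<pi> x else 0)" for x y
  have form: "(\<Sum>x\<in>UNIV. \<Sum>y\<in>UNIV. c x y * f x * f y) = inner_pi f (apply_rates f) - m * inner_pi f f"
    for f
  proof -
    have "c x y * f x * f y = \<pi> x * Q x y * f x * f y - (if x = y then m * (\<pi> x * f x * f x) else 0)"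
      for x y by (simp add: c_def algebra_simps)
    then show ?thesis
      by (simp add: inner_pi_def apply_rates_def sum_subtractf sum_distrib_left ac_simps)
  qed
  have "c x y = c y x" for x y by (simp add: c_def detailed_balance)
  then have "(\<Sum>y\<in>UNIV. c x y * f\<^sub>0 y) = 0"
    by (rule psd_form_zero_imp_kernel) (use min attained in \<open>simp_all add: form\<close>)
  moreover have "c x y * f\<^sub>0 y = \<pi> x * (Q x y * f\<^sub>0 y) - (if x = y then \<pi> x * (m * f\<^sub>0 x) else 0)"
    for y by (simp add: c_def algebra_simps)
  then have "(\<Sum>y\<in>UNIV. c x y * f\<^sub>0 y) = \<pi> x * (apply_rates f\<^sub>0 x - m * f\<^sub>0 x)"
    by (simp add: apply_rates_def sum_subtractf sum_distrib_left right_diff_distrib)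
  ultimately show ?thesis using weight_pos[of x] by simp
qed

lemma exists_mean_zero:
  assumes "2 \<le> CARD('n)"
  obtains f where "f \<noteq> (\<lambda>_. 0)" "(\<Sum>x\<in>UNIV. \<pi> x * f x) = 0"
proof -
  have "\<not> card (UNIV :: 'n set) \<le> Suc 0" using assms by simp
  then obtain a b :: 'n where "a \<noteq> b" using card_le_Suc0_iff_eq[of "UNIV :: 'n set"] by auto
  define f where "f x = (if x = a then \<pi> b else 0) - (if x = b then \<pi> a else 0)" for x
  have "\<pi> x * f x = (if x = a then \<pi> a * \<pi> b else 0) - (if x = b then \<pi> a * \<pi> b else 0)" for x
    by (simp add: f_def right_diff_distrib)
  then have "(\<Sum>x\<in>UNIV. \<pi> x * f x) = 0" by (simp add: sum_subtractf)
  moreover have "f \<noteq> (\<lambda>_. 0)" using \<open>a \<noteq> b\<close> weight_pos[of b] by (auto simp: fun_eq_iff f_def)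
  ultimately show ?thesis using that by blast
qed

context
  fixes \<gamma> :: real
  assumes gamma_pos: "0 < \<gamma>"
    and poincare: "\<And>f. (\<Sum>x\<in>UNIV. \<pi> x * f x) = 0 \<Longrightarrow> \<gamma> * inner_pi f f \<le> dirichlet f"
begin

lemma nonzero_eigenvalue_le:
  assumes "is_eigenvalue (to_mat Q) \<mu>" "\<mu> \<noteq> 0"
  shows "\<mu> \<le> - \<gamma>"
proof -
  obtain f where f: "f \<noteq> (\<lambda>_. 0)" "\<And>x. apply_rates f x = \<mu> * f x"
    using assms(1) unfolding is_eigenvalue_iff by blast
  have "inner_pi (\<lambda>_. 1) f = 0"
    using f(2) assms(2) by (intro eigenfunctions_orthogonal[of _ 0 _ \<mu>]) (auto simp: apply_rates_const)
  then have "\<gamma> * inner_pi f f \<le> dirichlet f" by (intro poincare) (simp add: inner_pi_def)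
  also have "dirichlet f = - (\<mu> * inner_pi f f)"
    using inner_pi_apply_rates_self[of f] by (simp add: f(2) inner_pi_def sum_distrib_left ac_simps)
  finally show ?thesis
    using inner_pi_self_pos[OF f(1)] mult_right_le_imp_le[of \<gamma> "inner_pi f f" "- \<mu>"] by simp
qed

lemma harmonic_imp_const:
  assumes "\<And>x. apply_rates f x = 0"
  shows "f x = f y"
proof -
  define c where "c = (\<Sum>x\<in>UNIV. \<pi> x * f x) / (\<Sum>x\<in>UNIV. \<pi> x)"
  have "(\<Sum>x\<in>UNIV. \<pi> x) > 0" using weight_pos by (intro sum_pos) auto
  moreover have "(\<Sum>x\<in>UNIV. \<pi> x * (f x + - c)) = (\<Sum>x\<in>UNIV. \<pi> x * f x) - c * (\<Sum>x\<in>UNIV. \<pi> x)"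
    by (simp add: algebra_simps sum.distrib sum_distrib_left sum_negf sum_subtractf)
  ultimately have "(\<Sum>x\<in>UNIV. \<pi> x * (f x + - c)) = 0" by (simp add: c_def)
  then have "\<gamma> * inner_pi (\<lambda>x. f x + - c) (\<lambda>x. f x + - c) \<le> dirichlet (\<lambda>x. f x + - c)"
    by (rule poincare)
  also have "\<dots> = dirichlet f" by (rule dirichlet_add_const)
  also have "dirichlet f = 0"
    using inner_pi_apply_rates_self[of f] assms by (simp add: inner_pi_def)
  finally have "inner_pi (\<lambda>x. f x + - c) (\<lambda>x. f x + - c) \<le> 0"
    using gamma_pos by (simp add: mult_le_0_iff)
  then have "(\<lambda>x. f x + - c) = (\<lambda>_. 0)"
    using inner_pi_self_pos[of "\<lambda>x. f x + - c"] by (meson not_le)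
  then have "f z = c" for z by (auto simp: fun_eq_iff)
  then show ?thesis by simp
qed

lemma dim_eigenspace_zero_le_1: "dim (eigenspace_of (to_mat Q) 0) \<le> 1"
proof -
  obtain a :: 'n where True by blast
  have "eigenspace_of (to_mat Q) 0 \<subseteq> span {\<chi> _. 1}"
  proof
    fix v assume "v \<in> eigenspace_of (to_mat Q) 0"
    then have "apply_rates (($) v) x = 0" for x
      by (simp add: eigenspace_of_def vec_eq_iff to_mat_mult_apply apply_rates_def)
    then have "v = (v $ a) *\<^sub>R (\<chi> _. 1)"
      using harmonic_imp_const[of "($) v"] by (auto simp: vec_eq_iff)
    then show "v \<in> span {\<chi> _. 1}" by (metis span_base span_mul singletonI)
  qed
  then have "dim (eigenspace_of (to_mat Q) 0) \<le> card {\<chi> _. 1 :: real^'n}"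
    by (rule dim_le_card) simp
  then show ?thesis by simp
qed

theorem Gap_ge_poincare_constant:
  assumes "2 \<le> CARD('n)"
  shows "\<gamma> \<le> Gap Q"
proof -
  have zero: "is_eigenvalue (to_mat Q) 0"
    unfolding is_eigenvalue_iff by (intro exI[of _ "\<lambda>_. 1"]) (simp add: apply_rates_const fun_eq_iff)
  obtain m f\<^sub>0 where m: "f\<^sub>0 \<noteq> (\<lambda>_. 0)" "m * inner_pi f\<^sub>0 f\<^sub>0 = inner_pi f\<^sub>0 (apply_rates f\<^sub>0)"
    "\<And>f. m * inner_pi f f \<le> inner_pi f (apply_rates f)"
    using exists_rayleigh_minimizer by blast
  have eig_m: "is_eigenvalue (to_mat Q) m"
    unfolding is_eigenvalue_iff using m(1) rayleigh_minimizer_eigenfunction[OF m(3) m(2)] by blast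
  \<comment> \<open>\<open>eig_k\<close> is a \<open>Max\<close>, so a second eigenvalue has to be exhibited explicitly.\<close>
  have "m \<noteq> 0"
  proof -
    obtain f where f: "f \<noteq> (\<lambda>_. 0)" "(\<Sum>x\<in>UNIV. \<pi> x * f x) = 0"
      using exists_mean_zero[OF assms] .
    have "m * inner_pi f f \<le> - dirichlet f" using m(3)[of f] by (simp add: inner_pi_apply_rates_self)
    also have "\<dots> \<le> - (\<gamma> * inner_pi f f)" using poincare[OF f(2)] by simp
    also have "\<dots> < 0" using gamma_pos inner_pi_self_pos[OF f(1)] by simp
    finally show ?thesis by auto
  qed
  have "- \<gamma> < 0" using gamma_pos by simp
  have "eig_k (to_mat Q) 2 \<le> - \<gamma>"
    using eig_k_2_le[OF finite_eigenvalues zero dim_eigenspace_zero_le_1 eig_m \<open>m \<noteq> 0\<close>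
          nonzero_eigenvalue_le \<open>- \<gamma> < 0\<close>] .
  then show ?thesis unfolding Gap_def by linarith
qed

end

end

section \<open>Canonical paths along a drift map\<close>

lemma funpow_reaches_fixpoint:
  fixes \<pi> :: "'a::finite \<Rightarrow> real"
  assumes pos: "\<And>x. 0 < \<pi> x" and "1 < r" and fixpoint: "T x\<^sub>0 = x\<^sub>0"
    and growth: "\<And>x. x \<noteq> x\<^sub>0 \<Longrightarrow> r * \<pi> x \<le> \<pi> (T x)"
  obtains M where "\<And>x. (T ^^ M) x = x\<^sub>0"
proof -
  have orbit_growth: "r ^ n * \<pi> x \<le> \<pi> ((T ^^ n) x)" if "\<forall>k<n. (T ^^ k) x \<noteq> x\<^sub>0" for n x
    using that
  proof (induction n)
    case (Suc n)
    then have "r * (r ^ n * \<pi> x) \<le> r * \<pi> ((T ^^ n) x)" using \<open>1 < r\<close> by simp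
    also have "\<dots> \<le> \<pi> ((T ^^ Suc n) x)" using Suc.prems growth by simp
    finally show ?case by (simp add: ac_simps)
  qed simp
  define lo where "lo = Min (range \<pi>)"
  define hi where "hi = Max (range \<pi>)"
  have "0 < lo" unfolding lo_def using pos by simp
  obtain M where M: "hi / lo < r ^ M" using real_arch_pow[OF \<open>1 < r\<close>] by blast
  have stays: "(T ^^ n) x\<^sub>0 = x\<^sub>0" for n by (induction n) (simp_all add: fixpoint)
  have "(T ^^ M) x = x\<^sub>0" for x
  proof (rule ccontr)
    assume "(T ^^ M) x \<noteq> x\<^sub>0"
    moreover have "(T ^^ M) x = x\<^sub>0" if "(T ^^ k) x = x\<^sub>0" "k < M" for k
      using that stays funpow_add[of "M - k" k T] by simp
    ultimately have "r ^ M * \<pi> x \<le> \<pi> ((T ^^ M) x)" by (intro orbit_growth) auto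
    moreover have "r ^ M * lo \<le> r ^ M * \<pi> x" unfolding lo_def using \<open>1 < r\<close> by simp
    moreover have "hi < r ^ M * lo" using M \<open>0 < lo\<close> by (simp add: field_simps)
    moreover have "\<pi> ((T ^^ M) x) \<le> hi" unfolding hi_def by simp
    ultimately show False by linarith
  qed
  then show ?thesis using that by blast
qed

definition pushforward :: "('a \<Rightarrow> real) \<Rightarrow> ('a \<Rightarrow> 'b) \<Rightarrow> 'b \<Rightarrow> real" where
  "pushforward \<pi> f z = (\<Sum>x | f x = z. \<pi> x)"

lemma pushforward_comp:
  fixes f :: "'a::finite \<Rightarrow> 'b::finite"
  shows "pushforward \<pi> (g \<circ> f) z = (\<Sum>y | g y = z. pushforward \<pi> f y)"
proof -
  have "(\<Sum>y | g y = z. pushforward \<pi> f y) = (\<Sum>y | g y = z. \<Sum>x | x \<in> {x. g (f x) = z} \<and> f x = y. \<pi> x)"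
    unfolding pushforward_def by (intro sum.cong refl arg_cong[where f = "sum \<pi>"]) auto
  also have "\<dots> = pushforward \<pi> (g \<circ> f) z"
    unfolding pushforward_def comp_def by (rule sum.group) auto
  finally show ?thesis ..
qed

lemma sum_comp_eq_pushforward:
  fixes f :: "'a::finite \<Rightarrow> 'b::finite"
  shows "(\<Sum>x\<in>UNIV. \<pi> x * h (f x)) = (\<Sum>z\<in>UNIV. pushforward \<pi> f z * h z)"
proof -
  have "(\<Sum>z\<in>UNIV. pushforward \<pi> f z * h z) = (\<Sum>z\<in>UNIV. \<Sum>x | x \<in> UNIV \<and> f x = z. \<pi> x * h (f x))"
    unfolding pushforward_def sum_distrib_right by (intro sum.cong) auto
  also have "\<dots> = (\<Sum>x\<in>UNIV. \<pi> x * h (f x))" by (rule sum.group) auto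
  finally show ?thesis ..
qed

lemma pushforward_funpow_le:
  fixes \<pi> :: "'a::finite \<Rightarrow> real"
  assumes fixpoint: "T x\<^sub>0 = x\<^sub>0" and "0 \<le> \<beta>"
    and one_step: "\<And>z. z \<noteq> x\<^sub>0 \<Longrightarrow> pushforward \<pi> T z \<le> \<beta> * \<pi> z"
  shows "z \<noteq> x\<^sub>0 \<Longrightarrow> pushforward \<pi> (T ^^ k) z \<le> \<beta> ^ k * \<pi> z"
proof (induction k arbitrary: z)
  case 0
  then show ?case by (simp add: pushforward_def)
next
  case (Suc k)
  have "pushforward \<pi> (T ^^ Suc k) z = (\<Sum>y | T y = z. pushforward \<pi> (T ^^ k) y)"
    by (simp add: pushforward_comp)
  also have "\<dots> \<le> (\<Sum>y | T y = z. \<beta> ^ k * \<pi> y)"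
    using Suc fixpoint by (intro sum_mono Suc.IH) auto
  also have "\<dots> = \<beta> ^ k * pushforward \<pi> T z" by (simp add: pushforward_def sum_distrib_left)
  also have "\<dots> \<le> \<beta> ^ k * (\<beta> * \<pi> z)"
    using one_step[OF Suc.prems] \<open>0 \<le> \<beta>\<close> by (simp add: mult_left_mono)
  also have "\<dots> = \<beta> ^ Suc k * \<pi> z" by simp
  finally show ?case .
qed

lemma weighted_Cauchy_Schwarz:
  fixes a w :: "'i \<Rightarrow> real"
  assumes "\<And>k. k \<in> I \<Longrightarrow> 0 < w k"
  shows "(\<Sum>k\<in>I. a k)\<^sup>2 \<le> (\<Sum>k\<in>I. w k) * (\<Sum>k\<in>I. (a k)\<^sup>2 / w k)"
proof -
  have "(\<Sum>k\<in>I. sqrt (w k) * (a k / sqrt (w k)))\<^sup>2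
      \<le> (\<Sum>k\<in>I. (sqrt (w k))\<^sup>2) * (\<Sum>k\<in>I. (a k / sqrt (w k))\<^sup>2)"
    by (rule Cauchy_Schwarz_ineq_sum)
  also have "(\<Sum>k\<in>I. (sqrt (w k))\<^sup>2) = (\<Sum>k\<in>I. w k)"
    using assms by (intro sum.cong) (auto simp: less_imp_le)
  also have "(\<Sum>k\<in>I. (a k / sqrt (w k))\<^sup>2) = (\<Sum>k\<in>I. (a k)\<^sup>2 / w k)"
  proof (intro sum.cong refl)
    fix k assume "k \<in> I"
    then show "(a k / sqrt (w k))\<^sup>2 = (a k)\<^sup>2 / w k"
      using assms by (simp add: power_divide less_imp_le)
  qed
  also have "(\<Sum>k\<in>I. sqrt (w k) * (a k / sqrt (w k))) = (\<Sum>k\<in>I. a k)"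
  proof (intro sum.cong refl)
    fix k assume "k \<in> I"
    then show "sqrt (w k) * (a k / sqrt (w k)) = a k" using assms[of k] by simp
  qed
  finally show ?thesis .
qed

lemma sum_comp_funpow_le:
  fixes \<pi> :: "'a::finite \<Rightarrow> real"
  assumes "T x\<^sub>0 = x\<^sub>0" "0 \<le> \<beta>" "\<And>z. z \<noteq> x\<^sub>0 \<Longrightarrow> pushforward \<pi> T z \<le> \<beta> * \<pi> z"
    and "\<And>z. 0 \<le> h z" "h x\<^sub>0 = 0"
  shows "(\<Sum>x\<in>UNIV. \<pi> x * h ((T ^^ k) x)) \<le> \<beta> ^ k * (\<Sum>x\<in>UNIV. \<pi> x * h x)"
proof -
  have "(\<Sum>x\<in>UNIV. \<pi> x * h ((T ^^ k) x)) = (\<Sum>z\<in>UNIV. pushforward \<pi> (T ^^ k) z * h z)"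
    by (rule sum_comp_eq_pushforward)
  also have "\<dots> \<le> (\<Sum>z\<in>UNIV. \<beta> ^ k * \<pi> z * h z)"
  proof (rule sum_mono)
    fix z
    show "pushforward \<pi> (T ^^ k) z * h z \<le> \<beta> ^ k * \<pi> z * h z"
      using assms pushforward_funpow_le[OF assms(1-3), of z k]
      by (cases "z = x\<^sub>0") (auto intro: mult_right_mono)
  qed
  also have "\<dots> = \<beta> ^ k * (\<Sum>x\<in>UNIV. \<pi> x * h x)" by (simp add: sum_distrib_left ac_simps)
  finally show ?thesis .
qed

lemma telescope_to_fixpoint:
  fixes v :: "'a \<Rightarrow> 'b::ab_group_add"
  assumes "(T ^^ M) x = x\<^sub>0"
  shows "v x - v x\<^sub>0 = (\<Sum>k<M. v ((T ^^ k) x) - v (T ((T ^^ k) x)))"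
  using sum_lessThan_telescope'[of "\<lambda>k. v ((T ^^ k) x)" M] assms by simp

lemma sum_sq_diff_fixpoint_le:
  fixes \<pi> v :: "'a::finite \<Rightarrow> real"
  assumes nonneg: "\<And>x. 0 \<le> \<pi> x" and reach: "\<And>x. (T ^^ M) x = x\<^sub>0" and fixpoint: "T x\<^sub>0 = x\<^sub>0"
    and "0 < \<theta>" "\<theta> < 1"
    and one_step: "\<And>z. z \<noteq> x\<^sub>0 \<Longrightarrow> pushforward \<pi> T z \<le> \<theta>\<^sup>2 * \<pi> z"
  shows "(1 - \<theta>)\<^sup>2 * (\<Sum>x\<in>UNIV. \<pi> x * (v x - v x\<^sub>0)\<^sup>2) \<le> (\<Sum>x\<in>UNIV. \<pi> x * (v x - v (T x))\<^sup>2)"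
proof -
  define g where "g y = v y - v (T y)" for y
  define S where "S = (\<Sum>x\<in>UNIV. \<pi> x * (g x)\<^sup>2)"
  have geom: "(\<Sum>k<M. \<theta> ^ k) \<le> 1 / (1 - \<theta>)"
    using \<open>0 < \<theta>\<close> \<open>\<theta> < 1\<close> by (simp add: sum_gp_strict divide_right_mono)
  have path: "(v x - v x\<^sub>0)\<^sup>2 \<le> 1 / (1 - \<theta>) * (\<Sum>k<M. (g ((T ^^ k) x))\<^sup>2 / \<theta> ^ k)" for x
  proof -
    have "(v x - v x\<^sub>0)\<^sup>2 \<le> (\<Sum>k<M. \<theta> ^ k) * (\<Sum>k<M. (g ((T ^^ k) x))\<^sup>2 / \<theta> ^ k)"
      unfolding telescope_to_fixpoint[OF reach] g_def[symmetric]
      using \<open>0 < \<theta>\<close> by (intro weighted_Cauchy_Schwarz) auto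
    also have "\<dots> \<le> 1 / (1 - \<theta>) * (\<Sum>k<M. (g ((T ^^ k) x))\<^sup>2 / \<theta> ^ k)"
      using geom \<open>0 < \<theta>\<close> by (intro mult_right_mono sum_nonneg) auto
    finally show ?thesis .
  qed
  have edge: "(\<Sum>x\<in>UNIV. \<pi> x * (g ((T ^^ k) x))\<^sup>2) \<le> (\<theta>\<^sup>2) ^ k * S" for k
    unfolding S_def using \<open>0 < \<theta>\<close> fixpoint one_step
    by (intro sum_comp_funpow_le[where h = "\<lambda>y. (g y)\<^sup>2"]) (auto simp: g_def)
  have "(\<Sum>x\<in>UNIV. \<pi> x * (v x - v x\<^sub>0)\<^sup>2)
      \<le> (\<Sum>x\<in>UNIV. \<pi> x * (1 / (1 - \<theta>) * (\<Sum>k<M. (g ((T ^^ k) x))\<^sup>2 / \<theta> ^ k)))"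
    using path nonneg by (intro sum_mono mult_left_mono) auto
  also have "\<dots> = 1 / (1 - \<theta>) * (\<Sum>k<M. (\<Sum>x\<in>UNIV. \<pi> x * (g ((T ^^ k) x))\<^sup>2) / \<theta> ^ k)"
    by (simp add: sum_distrib_left sum_divide_distrib ac_simps sum.swap[of _ UNIV "{..<M}"])
  also have "\<dots> \<le> 1 / (1 - \<theta>) * (\<Sum>k<M. (\<theta>\<^sup>2) ^ k * S / \<theta> ^ k)"
    using edge \<open>0 < \<theta>\<close> \<open>\<theta> < 1\<close> by (intro mult_left_mono sum_mono divide_right_mono) auto
  also have "(\<Sum>k<M. (\<theta>\<^sup>2) ^ k * S / \<theta> ^ k) = (\<Sum>k<M. \<theta> ^ k) * S"
    using \<open>0 < \<theta>\<close> by (simp add: sum_distrib_right power2_eq_square power_mult_distrib)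
  also have "1 / (1 - \<theta>) * ((\<Sum>k<M. \<theta> ^ k) * S) \<le> 1 / (1 - \<theta>) * (1 / (1 - \<theta>) * S)"
    using geom \<open>\<theta> < 1\<close> nonneg unfolding S_def
    by (intro mult_left_mono mult_right_mono sum_nonneg mult_nonneg_nonneg) auto
  finally have "(1 - \<theta>)\<^sup>2 * (\<Sum>x\<in>UNIV. \<pi> x * (v x - v x\<^sub>0)\<^sup>2)
      \<le> (1 - \<theta>)\<^sup>2 * (1 / (1 - \<theta>) * (1 / (1 - \<theta>) * S))"
    by (rule mult_left_mono) simp
  also have "\<dots> = S" using \<open>\<theta> < 1\<close> by (simp add: power2_eq_square)
  finally show ?thesis unfolding S_def g_def .
qed

section \<open>Stationary distributions of irreducible kernels\<close>

lemma irreducible_stationary_zero: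
  fixes K :: "'a::finite \<Rightarrow> 'a \<Rightarrow> real"
  assumes K_nonneg: "\<And>x y. 0 \<le> K x y" and irred: "irreducible_mat K"
    and d_nonneg: "\<And>x. 0 \<le> d x" and stat: "\<And>y. (\<Sum>x\<in>UNIV. d x * K x y) = d y"
    and "d y\<^sub>0 = 0"
  shows "d x = 0"
proof -
  have step: "d a = 0" if "d b = 0" "0 < K a b" for a b
  proof -
    have "(\<Sum>x\<in>UNIV. d x * K x b) = 0" using stat[of b] that(1) by simp
    then have "d a * K a b = 0"
      using d_nonneg K_nonneg by (subst (asm) sum_nonneg_eq_0_iff) auto
    then show ?thesis using that(2) by simp
  qed
  have "(x, y\<^sub>0) \<in> {(a, b). 0 < K a b}\<^sup>*" using irred unfolding irreducible_mat_def by blast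
  then show ?thesis
    by (induction rule: converse_rtrancl_induct) (use \<open>d y\<^sub>0 = 0\<close> step in auto)
qed

lemma stationary_dist_eqI:
  fixes K :: "'a::finite \<Rightarrow> 'a \<Rightarrow> real"
  assumes K_nonneg: "\<And>x y. 0 \<le> K x y" and irred: "irreducible_mat K"
    and pos: "\<And>x. 0 < \<mu> x" and sum1: "(\<Sum>x\<in>UNIV. \<mu> x) = 1"
    and stat: "\<And>y. (\<Sum>x\<in>UNIV. \<mu> x * K x y) = \<mu> y"
  shows "stationary_dist K = \<mu>"
  unfolding stationary_dist_def
proof (rule the_equality)
  show "(\<forall>x. 0 \<le> \<mu> x) \<and> (\<Sum>x\<in>UNIV. \<mu> x) = 1 \<and> (\<forall>y. (\<Sum>x\<in>UNIV. \<mu> x * K x y) = \<mu> y)"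
    using pos sum1 stat by (auto intro: less_imp_le)
next
  fix \<nu> assume \<nu>: "(\<forall>x. 0 \<le> \<nu> x) \<and> (\<Sum>x\<in>UNIV. \<nu> x) = 1 \<and> (\<forall>y. (\<Sum>x\<in>UNIV. \<nu> x * K x y) = \<nu> y)"
  define c where "c = Min (range (\<lambda>x. \<nu> x / \<mu> x))"
  have "c \<in> range (\<lambda>x. \<nu> x / \<mu> x)" unfolding c_def by (rule Min_in) auto
  then obtain y\<^sub>0 where y\<^sub>0: "c = \<nu> y\<^sub>0 / \<mu> y\<^sub>0" by blast
  define d where "d x = \<nu> x - c * \<mu> x" for x
  have "d x = 0" for x
  proof (rule irreducible_stationary_zero[OF K_nonneg irred])
    show "0 \<le> d x" for x
    proof -
      have "c \<le> \<nu> x / \<mu> x" unfolding c_def by (rule Min_le) auto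
      then show ?thesis using pos[of x] by (simp add: d_def field_simps)
    qed
    show "(\<Sum>x\<in>UNIV. d x * K x y) = d y" for y
    proof -
      have "(\<Sum>x\<in>UNIV. d x * K x y) = (\<Sum>x\<in>UNIV. \<nu> x * K x y) - c * (\<Sum>x\<in>UNIV. \<mu> x * K x y)"
        by (simp add: d_def left_diff_distrib sum_subtractf sum_distrib_left mult.assoc)
      then show ?thesis using \<nu> stat[of y] by (simp add: d_def)
    qed
    show "d y\<^sub>0 = 0" using y\<^sub>0 pos[of y\<^sub>0] by (simp add: d_def)
  qed
  then have "\<nu> = (\<lambda>x. c * \<mu> x)" by (auto simp: d_def fun_eq_iff)
  moreover from this have "c = 1" using \<nu> sum1 by (simp flip: sum_distrib_left)
  ultimately show "\<nu> = \<mu>" by simp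
qed

section \<open>Locally balanced chains with a drift to the mode\<close>

locale locally_balanced_chain =
  fixes \<pi> :: "'a::finite \<Rightarrow> real" and N :: "'a \<Rightarrow> 'a set" and p \<alpha> \<nu> :: real
    and xstar :: 'a and T :: "'a \<Rightarrow> 'a" and h :: "real \<Rightarrow> real"
  assumes card_ge_2: "2 \<le> CARD('a)"
    and pi_pos: "\<And>x. 0 < \<pi> x"
    and pi_sum: "(\<Sum>x\<in>UNIV. \<pi> x) = 1"
    and p_gt_1: "1 < p"
    and alpha_pos: "0 < \<alpha>"
    and alpha_less_nu: "\<alpha> < \<nu>"
    and N_sym: "\<And>x y. y \<in> N x \<longleftrightarrow> x \<in> N y"
    and N_irrefl: "\<And>x. x \<notin> N x"
    and N_irreducible: "\<And>K. stochastic K \<Longrightarrow> (\<And>x y. 0 < K x y \<longleftrightarrow> y \<in> N x) \<Longrightarrow> irreducible_mat K"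
    and N_card: "\<And>x. real (card (N x)) \<le> p powr \<alpha>"
    and T_fix: "T xstar = xstar"
    and T_nbr: "\<And>x. x \<noteq> xstar \<Longrightarrow> T x \<in> N x"
    and T_growth: "\<And>x. x \<noteq> xstar \<Longrightarrow> p powr \<nu> * \<pi> x \<le> \<pi> (T x)"
    and h_pos: "\<And>u. 0 < u \<Longrightarrow> 0 < h u"
    and h_mono: "mono_on {0<..} h"
    and h_bal: "\<And>u. 0 < u \<Longrightarrow> h u = u * h (1 / u)"
begin

abbreviation "Z \<equiv> Zh h \<pi> N"
abbreviation "E \<equiv> expect \<pi> Z"

lemma growth_gt_1: "1 < p powr \<nu>"
  using p_gt_1 alpha_pos alpha_less_nu powr_less_mono[of 0 \<nu> p] by simp

lemma N_nonempty: "N x \<noteq> {}"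
proof (cases "x = xstar")
  case True
  \<comment> \<open>\<open>T\<close> increases \<open>\<pi>\<close> off the mode, so the heaviest state \<open>w \<noteq> xstar\<close> has \<open>T w = xstar\<close>.\<close>
  have "\<not> card (UNIV :: 'a set) \<le> Suc 0" using card_ge_2 by simp
  then obtain a b :: 'a where "a \<noteq> b" using card_le_Suc0_iff_eq[of "UNIV :: 'a set"] by auto
  then have "UNIV - {xstar} \<noteq> {}" by (metis Diff_iff empty_iff iso_tuple_UNIV_I singletonD)
  then have "Max (\<pi> ` (UNIV - {xstar})) \<in> \<pi> ` (UNIV - {xstar})" by (intro Max_in) auto
  then obtain w where "w \<in> UNIV - {xstar}" "\<pi> w = Max (\<pi> ` (UNIV - {xstar}))"
    by (metis imageE)
  then have w: "w \<noteq> xstar" "\<pi> w = Max (\<pi> ` (UNIV - {xstar}))" by auto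
  have w_max: "\<pi> z \<le> \<pi> w" if "z \<noteq> xstar" for z
    unfolding w(2) using that by (intro Max_ge) auto
  have "T w = xstar"
  proof (rule ccontr)
    assume "T w \<noteq> xstar"
    then have "\<pi> (T w) \<le> \<pi> w" by (rule w_max)
    moreover have "p powr \<nu> * \<pi> w \<le> \<pi> (T w)" using T_growth w(1) .
    moreover have "\<pi> w < p powr \<nu> * \<pi> w" using growth_gt_1 pi_pos[of w] by simp
    ultimately show False by linarith
  qed
  then show ?thesis using T_nbr[OF w(1)] N_sym True by auto
qed (use T_nbr in auto)

lemma balance: "\<pi> x * h (\<pi> y / \<pi> x) = \<pi> y * h (\<pi> x / \<pi> y)"
  using h_bal[of "\<pi> y / \<pi> x"] pi_pos[of x] pi_pos[of y] by (simp add: field_simps)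

lemma h_ratio_pos: "0 < h (\<pi> y / \<pi> x)"
  using h_pos pi_pos by simp

lemma Zh_pos: "0 < Z x"
  unfolding Zh_def using N_nonempty[of x] h_ratio_pos by (intro sum_pos) auto

lemma expect_Zh_pos: "0 < E"
  unfolding expect_def using Zh_pos pi_pos by (intro sum_pos) auto

lemma Kh_pos_iff: "0 < Kh h \<pi> N x y \<longleftrightarrow> y \<in> N x"
  unfolding Kh_def using Zh_pos[of x] h_ratio_pos[of y x] by auto

lemma stochastic_Kh: "stochastic (Kh h \<pi> N)"
  unfolding stochastic_def
proof safe
  show "0 \<le> Kh h \<pi> N x y" for x y using Kh_pos_iff[of x y] by (auto simp: Kh_def)
  show "(\<Sum>y\<in>UNIV. Kh h \<pi> N x y) = 1" for x
    using Zh_pos[of x] by (simp add: Kh_def Zh_def sum.If_cases sum_divide_distrib[symmetric])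
qed

lemma stationary_dist_Kh: "stationary_dist (Kh h \<pi> N) = (\<lambda>x. \<pi> x * Z x / E)"
proof (rule stationary_dist_eqI)
  show "irreducible_mat (Kh h \<pi> N)" using stochastic_Kh Kh_pos_iff by (rule N_irreducible)
  show "0 \<le> Kh h \<pi> N x y" for x y using stochastic_Kh by (simp add: stochastic_def)
  show "0 < \<pi> x * Z x / E" for x using pi_pos Zh_pos expect_Zh_pos by simp
  show "(\<Sum>x\<in>UNIV. \<pi> x * Z x / E) = 1"
    using expect_Zh_pos by (simp add: expect_def flip: sum_divide_distrib)
  show "(\<Sum>x\<in>UNIV. \<pi> x * Z x / E * Kh h \<pi> N x y) = \<pi> y * Z y / E" for y
  proof -
    have "\<pi> x * Z x / E * Kh h \<pi> N x y = (if x \<in> N y then \<pi> y * h (\<pi> x / \<pi> y) / E else 0)" for x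
      using Zh_pos[of x] balance[of x y] N_sym[of y x] by (simp add: Kh_def)
    then show ?thesis by (simp add: sum.If_cases Zh_def sum_divide_distrib sum_distrib_left)
  qed
qed

text \<open>Off-diagonal entries of \<open>Q\<^sub>h\<close>: dividing \<open>K\<^sub>h\<close> by \<open>\<omega> = \<pi> / \<pi>\<^sub>h\<close> cancels \<open>Z\<^sub>h x\<close>.\<close>

definition rate :: "'a \<Rightarrow> 'a \<Rightarrow> real" where
  "rate x y = (if y \<in> N x then h (\<pi> y / \<pi> x) / E else 0)"

lemma rate_nonneg: "0 \<le> rate x y"
  unfolding rate_def using h_ratio_pos[of y x] expect_Zh_pos by simp

lemma Qh_eq: "Qh h \<pi> N x y = rate x y - (if x = y then \<Sum>z\<in>UNIV. rate x z else 0)"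
proof -
  have off: "Kh h \<pi> N a b / (\<pi> a / (\<pi> a * Z a / E)) = rate a b" for a b
    using pi_pos[of a] Zh_pos[of a] expect_Zh_pos by (simp add: Kh_def rate_def)
  have "rate x x = 0" by (simp add: rate_def N_irrefl)
  moreover have "(\<Sum>z\<in>UNIV. rate x z) = rate x x + (\<Sum>z\<in>UNIV - {x}. rate x z)"
    by (rule sum.remove) auto
  ultimately have "(\<Sum>z\<in>UNIV - {x}. rate x z) = (\<Sum>z\<in>UNIV. rate x z)" by linarith
  then show ?thesis unfolding Qh_def Let_def stationary_dist_Kh off using \<open>rate x x = 0\<close> by auto
qed

sublocale reversible_rates \<pi> "Qh h \<pi> N"
proof
  show "0 < \<pi> x" for x by (rule pi_pos)
  show "\<pi> x * Qh h \<pi> N x y = \<pi> y * Qh h \<pi> N y x" for x y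
    using balance[of x y] N_sym[of x y] by (auto simp: Qh_eq rate_def)
  show "(\<Sum>y\<in>UNIV. Qh h \<pi> N x y) = 0" for x
    by (simp add: Qh_eq sum_subtractf)
qed

definition theta :: real where "theta = p powr (- (\<nu> - \<alpha>) / 2)"

lemma theta_pos: "0 < theta"
  unfolding theta_def using p_gt_1 by simp

lemma theta_less_1: "theta < 1"
  unfolding theta_def using p_gt_1 alpha_less_nu powr_less_mono[of "- (\<nu> - \<alpha>) / 2" 0 p] by simp

lemma theta_sq: "theta\<^sup>2 = p powr \<alpha> / p powr \<nu>"
  unfolding theta_def by (simp add: power2_eq_square powr_diff flip: powr_add)

lemma pushforward_off_mode_le: "(\<Sum>x | x \<noteq> xstar \<and> T x = z. \<pi> x) \<le> theta\<^sup>2 * \<pi> z"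
proof -
  have sub: "{x. x \<noteq> xstar \<and> T x = z} \<subseteq> N z" using T_nbr N_sym by auto
  have "(\<Sum>x | x \<noteq> xstar \<and> T x = z. \<pi> x) \<le> (\<Sum>x | x \<noteq> xstar \<and> T x = z. \<pi> z / p powr \<nu>)"
    using T_growth p_gt_1 by (intro sum_mono) (auto simp: field_simps)
  also have "\<dots> = real (card {x. x \<noteq> xstar \<and> T x = z}) * (\<pi> z / p powr \<nu>)" by simp
  also have "\<dots> \<le> real (card (N z)) * (\<pi> z / p powr \<nu>)"
    using card_mono[OF _ sub] pi_pos[of z] p_gt_1 by (intro mult_right_mono) auto
  also have "\<dots> \<le> p powr \<alpha> * (\<pi> z / p powr \<nu>)"
    using N_card pi_pos[of z] p_gt_1 by (intro mult_right_mono) auto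
  finally show ?thesis by (simp add: theta_sq)
qed

lemma pushforward_T_le:
  assumes "z \<noteq> xstar"
  shows "pushforward \<pi> T z \<le> theta\<^sup>2 * \<pi> z"
proof -
  have "{x. T x = z} = {x. x \<noteq> xstar \<and> T x = z}" using assms T_fix by auto
  then show ?thesis using pushforward_off_mode_le[of z] by (simp add: pushforward_def)
qed

lemma dirichlet_term_nonneg: "0 \<le> \<pi> x * Qh h \<pi> N x y * (f x - f y)\<^sup>2"
  using pi_pos[of x] rate_nonneg[of x y] by (cases "x = y") (simp_all add: Qh_eq)

lemma dirichlet_ge_along_T:
  "h (p powr \<nu>) / E * (\<Sum>x\<in>UNIV. \<pi> x * (f x - f (T x))\<^sup>2) \<le> 2 * dirichlet f"
proof -
  have "h (p powr \<nu>) / E * (\<pi> x * (f x - f (T x))\<^sup>2)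
      \<le> (\<Sum>y\<in>UNIV. \<pi> x * Qh h \<pi> N x y * (f x - f y)\<^sup>2)" for x
  proof (cases "x = xstar")
    case True
    then show ?thesis using dirichlet_term_nonneg by (simp add: T_fix sum_nonneg)
  next
    case False
    have "p powr \<nu> \<le> \<pi> (T x) / \<pi> x" using T_growth[OF False] pi_pos[of x] by (simp add: field_simps)
    then have "h (p powr \<nu>) \<le> h (\<pi> (T x) / \<pi> x)"
      using growth_gt_1 pi_pos by (intro mono_onD[OF h_mono]) auto
    then have "h (p powr \<nu>) / E \<le> Qh h \<pi> N x (T x)"
      using T_nbr[OF False] N_irrefl expect_Zh_pos by (auto simp: Qh_eq rate_def divide_right_mono)
    moreover have "0 \<le> \<pi> x * (f x - f (T x))\<^sup>2" using pi_pos[of x] by simp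
    ultimately have "h (p powr \<nu>) / E * (\<pi> x * (f x - f (T x))\<^sup>2)
        \<le> Qh h \<pi> N x (T x) * (\<pi> x * (f x - f (T x))\<^sup>2)"
      by (rule mult_right_mono)
    also have "\<dots> = \<pi> x * Qh h \<pi> N x (T x) * (f x - f (T x))\<^sup>2" by simp
    also have "\<dots> \<le> (\<Sum>y\<in>UNIV. \<pi> x * Qh h \<pi> N x y * (f x - f y)\<^sup>2)"
      using dirichlet_term_nonneg by (intro member_le_sum) auto
    finally show ?thesis .
  qed
  then have "(\<Sum>x\<in>UNIV. h (p powr \<nu>) / E * (\<pi> x * (f x - f (T x))\<^sup>2)) \<le> 2 * dirichlet f"
    unfolding dirichlet_def by (simp add: sum_mono)
  then show ?thesis by (simp add: sum_distrib_left)
qed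

lemma inner_pi_le_sum_sq_diff:
  assumes "(\<Sum>x\<in>UNIV. \<pi> x * f x) = 0"
  shows "inner_pi f f \<le> (\<Sum>x\<in>UNIV. \<pi> x * (f x - c)\<^sup>2)"
proof -
  have "(\<Sum>x\<in>UNIV. \<pi> x * (f x - c)\<^sup>2)
      = inner_pi f f - 2 * c * (\<Sum>x\<in>UNIV. \<pi> x * f x) + c\<^sup>2 * (\<Sum>x\<in>UNIV. \<pi> x)"
    by (simp add: inner_pi_self_eq power2_diff algebra_simps sum.distrib sum_subtractf
        sum_distrib_left sum_distrib_right)
  then show ?thesis using assms pi_sum by simp
qed

lemma poincare_Qh:
  assumes "(\<Sum>x\<in>UNIV. \<pi> x * f x) = 0"
  shows "h (p powr \<nu>) / E * (1 - theta)\<^sup>2 / 2 * inner_pi f f \<le> dirichlet f"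
proof -
  obtain M where M: "\<And>x. (T ^^ M) x = xstar"
    by (rule funpow_reaches_fixpoint[of \<pi> "p powr \<nu>" T xstar])
      (use pi_pos growth_gt_1 T_fix T_growth in auto)
  have "(1 - theta)\<^sup>2 * inner_pi f f \<le> (1 - theta)\<^sup>2 * (\<Sum>x\<in>UNIV. \<pi> x * (f x - f xstar)\<^sup>2)"
    using inner_pi_le_sum_sq_diff[OF assms] by (simp add: mult_left_mono)
  also have "\<dots> \<le> (\<Sum>x\<in>UNIV. \<pi> x * (f x - f (T x))\<^sup>2)"
    using pi_pos theta_pos theta_less_1 pushforward_T_le
    by (intro sum_sq_diff_fixpoint_le[OF _ M T_fix]) (auto simp: less_imp_le)
  finally have "h (p powr \<nu>) / E * ((1 - theta)\<^sup>2 * inner_pi f f)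
      \<le> h (p powr \<nu>) / E * (\<Sum>x\<in>UNIV. \<pi> x * (f x - f (T x))\<^sup>2)"
    using h_pos[of "p powr \<nu>"] p_gt_1 expect_Zh_pos by (intro mult_left_mono) auto
  also have "\<dots> \<le> 2 * dirichlet f" by (rule dirichlet_ge_along_T)
  finally show ?thesis by simp
qed

lemma Gap_Qh_ge: "h (p powr \<nu>) / E * (1 - theta)\<^sup>2 / 2 \<le> Gap (Qh h \<pi> N)"
proof (rule Gap_ge_poincare_constant[OF _ poincare_Qh card_ge_2])
  show "0 < h (p powr \<nu>) / E * (1 - theta)\<^sup>2 / 2"
    using h_pos[of "p powr \<nu>"] p_gt_1 expect_Zh_pos theta_less_1 by simp
qed

lemma kappa_eq: "kappa p \<alpha> \<nu> = (1 - theta) ^ 3 / 2"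
  by (simp add: kappa_def theta_def)

lemma kappa_pos: "0 < kappa p \<alpha> \<nu>"
  using theta_less_1 by (simp add: kappa_eq)

theorem Gap_Qh_ge_kappa: "kappa p \<alpha> \<nu> * h (p powr \<nu>) / E \<le> Gap (Qh h \<pi> N)"
proof -
  have "(1 - theta) ^ 3 \<le> (1 - theta)\<^sup>2"
    using theta_pos theta_less_1 by (intro power_decreasing) auto
  have "kappa p \<alpha> \<nu> * h (p powr \<nu>) / E = (1 - theta) ^ 3 * (h (p powr \<nu>) / E) / 2"
    by (simp add: kappa_eq)
  also have "\<dots> \<le> (1 - theta)\<^sup>2 * (h (p powr \<nu>) / E) / 2"
    using \<open>(1 - theta) ^ 3 \<le> (1 - theta)\<^sup>2\<close> h_pos[of "p powr \<nu>"] p_gt_1 expect_Zh_pos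
    by (intro divide_right_mono mult_right_mono) auto
  also have "\<dots> = h (p powr \<nu>) / E * (1 - theta)\<^sup>2 / 2" by simp
  also have "\<dots> \<le> Gap (Qh h \<pi> N)" by (rule Gap_Qh_ge)
  finally show ?thesis .
qed

lemma h_div_expect_le_Gap_div_kappa: "2 * h (p powr \<nu>) / E \<le> 2 * Gap (Qh h \<pi> N) / kappa p \<alpha> \<nu>"
  using Gap_Qh_ge_kappa kappa_pos by (simp add: field_simps)

lemma expect_Zh_eq: "E = (\<Sum>x\<in>UNIV. \<Sum>y\<in>N x. \<pi> x * h (\<pi> y / \<pi> x))"
  by (simp add: expect_def Zh_def sum_distrib_left)

lemma sum_neighbours_swap: "(\<Sum>x\<in>UNIV. \<Sum>y\<in>N x. g x y) = (\<Sum>x\<in>UNIV. \<Sum>y\<in>N x. g y x)"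
proof -
  have "(\<Sum>x\<in>UNIV. \<Sum>y\<in>{y \<in> UNIV. y \<in> N x}. g x y) = (\<Sum>y\<in>UNIV. \<Sum>x\<in>{x \<in> UNIV. y \<in> N x}. g x y)"
    by (rule sum.swap_restrict) auto
  moreover have "{x \<in> UNIV. y \<in> N x} = N y" for y using N_sym by auto
  ultimately show ?thesis by simp
qed

lemma sum_neighbours_add:
  fixes g :: "'a \<Rightarrow> real"
  shows "(\<Sum>x\<in>UNIV. \<Sum>y\<in>N x. g x + g y) = 2 * (\<Sum>x\<in>UNIV. card (N x) * g x)"
  using sum_neighbours_swap[of "\<lambda>x y. g x"] by (simp add: sum.distrib)

lemma pi_le_1: "\<pi> x \<le> 1"
  using member_le_sum[of x UNIV \<pi>] pi_pos pi_sum by (simp add: less_imp_le)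

lemma mass_off_mode_le: "(\<Sum>x\<in>UNIV - {xstar}. \<pi> x) \<le> theta\<^sup>2"
proof -
  have "(\<Sum>x\<in>UNIV - {xstar}. \<pi> x) = (\<Sum>z\<in>UNIV. \<Sum>x | x \<in> UNIV - {xstar} \<and> T x = z. \<pi> x)"
    by (rule sum.group[symmetric]) auto
  also have "\<dots> \<le> (\<Sum>z\<in>UNIV. theta\<^sup>2 * \<pi> z)"
    using pushforward_off_mode_le by (intro sum_mono) simp
  also have "\<dots> = theta\<^sup>2" by (simp add: pi_sum flip: sum_distrib_left)
  finally show ?thesis .
qed

lemma p_powr_alpha_theta_sq: "p powr \<alpha> * theta\<^sup>2 = p powr (2 * \<alpha> - \<nu>)"
  by (simp add: theta_sq powr_diff flip: powr_add)

definition off_mode :: "'a \<Rightarrow> real" where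
  "off_mode x = (if x = xstar then 0 else \<pi> x)"

lemma off_mode_nonneg: "0 \<le> off_mode x"
  unfolding off_mode_def using pi_pos[of x] by simp

lemma sum_neighbours_off_mode_le:
  "(\<Sum>x\<in>UNIV. \<Sum>y\<in>N x. off_mode x + off_mode y) \<le> 2 * p powr (2 * \<alpha> - \<nu>)"
proof -
  have "(\<Sum>x\<in>UNIV. card (N x) * off_mode x)
      = card (N xstar) * off_mode xstar + (\<Sum>x\<in>UNIV - {xstar}. card (N x) * off_mode x)"
    by (rule sum.remove) auto
  also have "\<dots> = (\<Sum>x\<in>UNIV - {xstar}. card (N x) * \<pi> x)"
    by (simp add: off_mode_def)
  also have "\<dots> \<le> (\<Sum>x\<in>UNIV - {xstar}. p powr \<alpha> * \<pi> x)"
    using N_card pi_pos by (intro sum_mono mult_right_mono) (auto simp: less_imp_le)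
  also have "\<dots> \<le> p powr (2 * \<alpha> - \<nu>)"
    using mass_off_mode_le
    by (simp add: mult_left_mono flip: sum_distrib_left p_powr_alpha_theta_sq)
  finally show ?thesis unfolding sum_neighbours_add by simp
qed

lemma sum_sqrt_neighbours_mode_le: "(\<Sum>y\<in>N xstar. sqrt (\<pi> y)) \<le> p powr (\<alpha> - \<nu> / 2)"
proof -
  define s where "s = p powr (\<nu> / 2)"
  have "0 < s" unfolding s_def using p_gt_1 by simp
  have s_sq: "s * s = p powr \<nu>" unfolding s_def by (simp flip: powr_add)
  have "sqrt (\<pi> y) \<le> (s * \<pi> y + 1 / s) / 2" for y
    using arith_geo_mean_sqrt[of "s * \<pi> y" "1 / s"] \<open>0 < s\<close> pi_pos[of y] by simp
  then have "(\<Sum>y\<in>N xstar. sqrt (\<pi> y)) \<le> (\<Sum>y\<in>N xstar. (s * \<pi> y + 1 / s) / 2)"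
    by (rule sum_mono)
  also have "\<dots> = (s * (\<Sum>y\<in>N xstar. \<pi> y) + card (N xstar) / s) / 2"
    by (simp add: sum.distrib sum_distrib_left flip: sum_divide_distrib)
  also have "\<dots> \<le> (s * theta\<^sup>2 + p powr \<alpha> / s) / 2"
  proof -
    have "(\<Sum>y\<in>N xstar. \<pi> y) \<le> (\<Sum>y\<in>UNIV - {xstar}. \<pi> y)"
      using N_irrefl[of xstar] pi_pos by (intro sum_mono2) (auto simp: less_imp_le)
    then have "(\<Sum>y\<in>N xstar. \<pi> y) \<le> theta\<^sup>2" using mass_off_mode_le by linarith
    then show ?thesis
      using N_card[of xstar] \<open>0 < s\<close>
      by (intro divide_right_mono add_mono mult_left_mono) (auto simp: divide_right_mono)
  qed
  also have "\<dots> = p powr \<alpha> / s"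
    using \<open>0 < s\<close> s_sq p_gt_1 by (simp add: theta_sq field_simps)
  finally show ?thesis unfolding s_def by (simp add: powr_diff)
qed

lemma expect_Zh_le_one_plus:
  assumes "\<And>u. 0 < u \<Longrightarrow> h u = 1 + u"
  shows "E \<le> 2 * p powr \<alpha>"
proof -
  have "\<pi> x * h (\<pi> y / \<pi> x) = \<pi> x + \<pi> y" for x y
    using assms[of "\<pi> y / \<pi> x"] pi_pos[of x] pi_pos[of y] by (simp add: field_simps)
  then have "E = (\<Sum>x\<in>UNIV. \<Sum>y\<in>N x. \<pi> x + \<pi> y)" by (simp add: expect_Zh_eq)
  also have "\<dots> \<le> 2 * (\<Sum>x\<in>UNIV. p powr \<alpha> * \<pi> x)"
    unfolding sum_neighbours_add using N_card pi_pos
    by (intro mult_left_mono sum_mono mult_right_mono) (auto simp: less_imp_le)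
  also have "\<dots> = 2 * p powr \<alpha>" by (simp add: pi_sum flip: sum_distrib_left)
  finally show ?thesis .
qed

lemma expect_Zh_le_min:
  assumes "\<And>u. 0 < u \<Longrightarrow> h u = min 1 u"
  shows "E \<le> 2 * p powr (2 * \<alpha> - \<nu>)"
proof -
  have "\<pi> x * h (\<pi> y / \<pi> x) \<le> off_mode x + off_mode y" if "y \<in> N x" for x y
  proof -
    have "\<pi> x * h (\<pi> y / \<pi> x) = min (\<pi> x) (\<pi> y)"
      using assms[of "\<pi> y / \<pi> x"] pi_pos[of x] pi_pos[of y] by (simp add: min_def field_simps)
    also have "\<dots> \<le> off_mode x + off_mode y"
      using that N_irrefl[of x] off_mode_nonneg[of x] off_mode_nonneg[of y]
      by (auto simp: off_mode_def)
    finally show ?thesis .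
  qed
  then have "E \<le> (\<Sum>x\<in>UNIV. \<Sum>y\<in>N x. off_mode x + off_mode y)"
    unfolding expect_Zh_eq by (intro sum_mono) auto
  also have "\<dots> \<le> 2 * p powr (2 * \<alpha> - \<nu>)" by (rule sum_neighbours_off_mode_le)
  finally show ?thesis .
qed

lemma sqrt_mult_le_edge_bound:
  assumes "y \<in> N x"
  shows "sqrt (\<pi> x * \<pi> y) \<le> (off_mode x + off_mode y) / 2
    + (if x = xstar then sqrt (\<pi> y) else 0) + (if y = xstar then sqrt (\<pi> x) else 0)"
proof -
  have "\<pi> x * \<pi> y \<le> \<pi> y" "\<pi> x * \<pi> y \<le> \<pi> x"
    using pi_le_1[of x] pi_le_1[of y] pi_pos[of x] pi_pos[of y]
    by (simp_all add: mult_left_le_one_le mult_left_le)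
  then have sqrt_le: "sqrt (\<pi> x * \<pi> y) \<le> sqrt (\<pi> y)" "sqrt (\<pi> x * \<pi> y) \<le> sqrt (\<pi> x)"
    by (simp_all only: real_sqrt_le_mono)
  have am_gm: "sqrt (\<pi> x * \<pi> y) \<le> (\<pi> x + \<pi> y) / 2"
    using pi_pos[of x] pi_pos[of y] by (intro arith_geo_mean_sqrt) (auto simp: less_imp_le)
  consider "x = xstar" "y \<noteq> xstar" | "x \<noteq> xstar" "y = xstar" | "x \<noteq> xstar" "y \<noteq> xstar"
    using assms N_irrefl[of x] by blast
  then show ?thesis
  proof cases
    case 1
    then show ?thesis using sqrt_le(1) pi_pos[of y] by (simp add: off_mode_def del: real_sqrt_le_iff)
  next
    case 2
    then show ?thesis using sqrt_le(2) pi_pos[of x] by (simp add: off_mode_def del: real_sqrt_le_iff)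
  next
    case 3
    then show ?thesis using am_gm by (simp add: off_mode_def)
  qed
qed

lemma expect_Zh_le_sqrt:
  assumes "\<And>u. 0 < u \<Longrightarrow> h u = sqrt u"
  shows "E \<le> 2 * (p powr (2 * \<alpha> - \<nu>) + p powr (\<alpha> - \<nu> / 2))"
proof -
  define b where "b x y = (off_mode x + off_mode y) / 2
      + (if x = xstar then sqrt (\<pi> y) else 0) + (if y = xstar then sqrt (\<pi> x) else 0)" for x y
  have "\<pi> x * h (\<pi> y / \<pi> x) = sqrt (\<pi> y) * (\<pi> x / sqrt (\<pi> x))" for x y
    using assms[of "\<pi> y / \<pi> x"] pi_pos[of x] pi_pos[of y] by (simp add: real_sqrt_divide)
  also have "\<dots> x y = sqrt (\<pi> x * \<pi> y)" for x y
    using pi_pos[of x] by (simp add: real_div_sqrt real_sqrt_mult less_imp_le)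
  finally have "E = (\<Sum>x\<in>UNIV. \<Sum>y\<in>N x. sqrt (\<pi> x * \<pi> y))" by (simp add: expect_Zh_eq)
  also have "\<dots> \<le> (\<Sum>x\<in>UNIV. \<Sum>y\<in>N x. b x y)"
    unfolding b_def using sqrt_mult_le_edge_bound by (intro sum_mono) auto
  also have "\<dots> = (\<Sum>x\<in>UNIV. \<Sum>y\<in>N x. (off_mode x + off_mode y) / 2)
      + 2 * (\<Sum>y\<in>N xstar. sqrt (\<pi> y))"
  proof -
    have "(\<Sum>x\<in>UNIV. \<Sum>y\<in>N x. if y = xstar then sqrt (\<pi> x) else 0)
        = (\<Sum>x\<in>UNIV. \<Sum>y\<in>N x. if x = xstar then sqrt (\<pi> y) else 0)"
      by (rule sum_neighbours_swap)
    moreover have "(\<Sum>y\<in>N x. if x = xstar then sqrt (\<pi> y) else 0)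
        = (if x = xstar then \<Sum>y\<in>N xstar. sqrt (\<pi> y) else 0)" for x
      by simp
    ultimately show ?thesis unfolding b_def sum.distrib by simp
  qed
  also have "\<dots> \<le> 2 * (p powr (2 * \<alpha> - \<nu>) + p powr (\<alpha> - \<nu> / 2))"
  proof -
    have "(\<Sum>x\<in>UNIV. \<Sum>y\<in>N x. (off_mode x + off_mode y) / 2)
        = (\<Sum>x\<in>UNIV. \<Sum>y\<in>N x. off_mode x + off_mode y) / 2"
      by (simp add: sum_divide_distrib)
    then have "(\<Sum>x\<in>UNIV. \<Sum>y\<in>N x. (off_mode x + off_mode y) / 2) \<le> p powr (2 * \<alpha> - \<nu>)"
      using sum_neighbours_off_mode_le by simp
    then show ?thesis
      using sum_sqrt_neighbours_mode_le powr_ge_zero[of p "2 * \<alpha> - \<nu>"] by (smt (verit))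
  qed
  finally show ?thesis .
qed

lemma Gap_div_kappa_ge_of_expect_le:
  assumes "E \<le> B"
  shows "2 * h (p powr \<nu>) / B \<le> 2 * Gap (Qh h \<pi> N) / kappa p \<alpha> \<nu>"
proof -
  have "2 * h (p powr \<nu>) / B \<le> 2 * h (p powr \<nu>) / E"
    using assms expect_Zh_pos h_pos[of "p powr \<nu>"] p_gt_1 by (intro divide_left_mono) auto
  also have "\<dots> \<le> 2 * Gap (Qh h \<pi> N) / kappa p \<alpha> \<nu>" by (rule h_div_expect_le_Gap_div_kappa)
  finally show ?thesis .
qed

lemma Gap_div_kappa_ge_one_plus:
  assumes "\<And>u. 0 < u \<Longrightarrow> h u = 1 + u"
  shows "p powr (\<nu> - \<alpha>) \<le> 2 * Gap (Qh h \<pi> N) / kappa p \<alpha> \<nu>"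
proof -
  have "p powr (\<nu> - \<alpha>) = p powr \<nu> / p powr \<alpha>" by (rule powr_diff)
  also have "\<dots> \<le> (1 + p powr \<nu>) / p powr \<alpha>" using p_gt_1 by (intro divide_right_mono) auto
  also have "\<dots> = 2 * h (p powr \<nu>) / (2 * p powr \<alpha>)"
    using assms[of "p powr \<nu>"] p_gt_1 by (simp add: field_simps)
  also have "\<dots> \<le> 2 * Gap (Qh h \<pi> N) / kappa p \<alpha> \<nu>"
    using expect_Zh_le_one_plus[OF assms] by (rule Gap_div_kappa_ge_of_expect_le)
  finally show ?thesis .
qed

lemma Gap_div_kappa_ge_min:
  assumes "\<And>u. 0 < u \<Longrightarrow> h u = min 1 u"
  shows "p powr (\<nu> - 2 * \<alpha>) \<le> 2 * Gap (Qh h \<pi> N) / kappa p \<alpha> \<nu>"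
proof -
  have "p powr (\<nu> - 2 * \<alpha>) = 2 * h (p powr \<nu>) / (2 * p powr (2 * \<alpha> - \<nu>))"
    using assms[of "p powr \<nu>"] growth_gt_1 p_gt_1 by (simp add: powr_diff)
  also have "\<dots> \<le> 2 * Gap (Qh h \<pi> N) / kappa p \<alpha> \<nu>"
    using expect_Zh_le_min[OF assms] by (rule Gap_div_kappa_ge_of_expect_le)
  finally show ?thesis .
qed

lemma Gap_div_kappa_ge_sqrt:
  assumes "\<And>u. 0 < u \<Longrightarrow> h u = sqrt u"
  shows "p powr (\<nu> / 2) / (p powr (2 * \<alpha> - \<nu>) + p powr (\<alpha> - \<nu> / 2))
    \<le> 2 * Gap (Qh h \<pi> N) / kappa p \<alpha> \<nu>"
proof -
  have "p powr (\<nu> / 2) = h (p powr \<nu>)"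
    using assms[of "p powr \<nu>"] p_gt_1 by (simp add: powr_half_sqrt[symmetric] powr_powr)
  then have "p powr (\<nu> / 2) / (p powr (2 * \<alpha> - \<nu>) + p powr (\<alpha> - \<nu> / 2))
      = 2 * h (p powr \<nu>) / (2 * (p powr (2 * \<alpha> - \<nu>) + p powr (\<alpha> - \<nu> / 2)))"
    by (simp only: mult_divide_mult_cancel_left_if) simp
  also have "\<dots> \<le> 2 * Gap (Qh h \<pi> N) / kappa p \<alpha> \<nu>"
    using expect_Zh_le_sqrt[OF assms] by (rule Gap_div_kappa_ge_of_expect_le)
  finally show ?thesis .
qed

end

theorem theorem1:
  fixes \<pi> :: "'a::finite \<Rightarrow> real"
    and N :: "'a \<Rightarrow> 'a set"
    and p \<alpha> \<nu> :: real
    and xstar :: 'a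
    and T :: "'a \<Rightarrow> 'a"
    and h :: "real \<Rightarrow> real"
  assumes card2: "CARD('a) \<ge> 2"
    and pi_pos: "\<forall>x. \<pi> x > 0"
    and pi_sum: "(\<Sum>x\<in>UNIV. \<pi> x) = 1"
    and p_gt: "p > 1"
    and alpha_pos: "\<alpha> > 0"
    and N_sym: "\<forall>x y. y \<in> N x \<longleftrightarrow> x \<in> N y"
    and N_irrefl: "\<forall>x. x \<notin> N x"
    and N_irred: "\<forall>K. stochastic K \<and> (\<forall>x y. K x y > 0 \<longleftrightarrow> y \<in> N x) \<longrightarrow> irreducible_mat K"
    and N_card: "\<forall>x. real (card (N x)) \<le> p powr \<alpha>"
    and nu_gt: "\<nu> > \<alpha>"
    and T_fix: "T xstar = xstar"
    and T_nbr: "\<forall>x. x \<noteq> xstar \<longrightarrow> T x \<in> N x \<and> \<pi> (T x) \<ge> p powr \<nu> * \<pi> x"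
    and h_pos: "\<forall>u>0. h u > 0"
    and h_mono: "mono_on {0<..} h"
    and h_bal: "\<forall>u>0. h u = u * h (1 / u)"
  shows "Gap (Qh h \<pi> N) \<ge> kappa p \<alpha> \<nu> * h (p powr \<nu>) / expect \<pi> (Zh h \<pi> N)
     \<and> ((\<forall>u>0. h u = 1 + u) \<longrightarrow>
          2 * Gap (Qh h \<pi> N) / kappa p \<alpha> \<nu> \<ge> p powr (\<nu> - \<alpha>))
     \<and> ((\<forall>u>0. h u = min 1 u) \<longrightarrow>
          2 * Gap (Qh h \<pi> N) / kappa p \<alpha> \<nu> \<ge> p powr (\<nu> - 2 * \<alpha>))
     \<and> ((\<forall>u>0. h u = sqrt u) \<longrightarrow>
          2 * Gap (Qh h \<pi> N) / kappa p \<alpha> \<nu> \<ge>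
            p powr (\<nu> / 2) / (p powr (2 * \<alpha> - \<nu>) + p powr (\<alpha> - \<nu> / 2)))"
proof -
  interpret chain: locally_balanced_chain \<pi> N p \<alpha> \<nu> xstar T h
    by unfold_locales (use assms in blast)+
  show ?thesis
    using chain.Gap_Qh_ge_kappa chain.Gap_div_kappa_ge_one_plus chain.Gap_div_kappa_ge_min
      chain.Gap_div_kappa_ge_sqrt by auto
qed

end
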